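(* Let $\alpha$ be irrational, $K\ge 2$, and let $0\le N<q_K$ have Ostrowski expansion $N=\sum_{\ell=0}^{K-1}b_\ell q_\ell$ (with $b_\ell:=0$ for $\ell\ge K$). Let $1\le \ell\le K-1$ with $b_\ell\ge1$, and let $\varepsilon_\ell(N):=q_\ell\sum_{k=\ell+1}^{K-1}(-1)^{k+\ell}b_k\delta_k$. Then: (i) $-\frac{1}{a_{\ell+1}}\le -q_\ell\delta_\ell\le \varepsilon_\ell(N)\le \frac{1}{a_{\ell+1}}$; (ii) $1-\lvert\varepsilon_\ell(N)\rvert\gg \frac{1}{a_{\ell+2}}$, and if moreover $b_{\ell+1}\le \frac{a_{\ell+2}}{2}$, then $1-\lvert \varepsilon_\ell(N)\rvert\gg 1$, with absolute implied constants.
   Context: For irrational $\alpha=[a_0;a_1,a_2,\dots]$, $p_k/q_k=[a_0;a_1,\dots,a_k]$ denote the convergents, with $q_{k+1}=a_{k+1}q_k+q_{k-1}$, and $\delta_k:=\lVert q_k\alpha\rVert=\lvert q_k\alpha-p_k\rvert$, where $\lVert x\rVert$ is the distance from $x$ to the nearest integer. The Ostrowski expansion of an integer $0\le N<q_K$ is the unique representation $N=\sum_{\ell=0}^{K-1}b_\ell q_\ell$ with integers $0\le b_\ell\le a_{\ell+1}$, $b_0<a_1$, and $b_{\ell-1}=0$ whenever $b_\ell=a_{\ell+1}$. $f\gg g$ means $f\ge c\,g$ for a positive absolute constant $c$. *)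

theory Defs
  imports Complex_Main
begin

fun cf_rem :: "real \<Rightarrow> nat \<Rightarrow> real" where
  "cf_rem x 0 = x"
| "cf_rem x (Suc n) = 1 / (cf_rem x n - of_int \<lfloor>cf_rem x n\<rfloor>)"

definition cf_a :: "real \<Rightarrow> nat \<Rightarrow> int" where
  "cf_a x n = \<lfloor>cf_rem x n\<rfloor>"

fun cf_q :: "real \<Rightarrow> nat \<Rightarrow> int" where
  "cf_q x 0 = 1"
| "cf_q x (Suc 0) = cf_a x 1"
| "cf_q x (Suc (Suc n)) = cf_a x (Suc (Suc n)) * cf_q x (Suc n) + cf_q x n"

fun cf_p :: "real \<Rightarrow> nat \<Rightarrow> int" where
  "cf_p x 0 = cf_a x 0"
| "cf_p x (Suc 0) = cf_a x 1 * cf_a x 0 + 1"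
| "cf_p x (Suc (Suc n)) = cf_a x (Suc (Suc n)) * cf_p x (Suc n) + cf_p x n"

definition cf_delta :: "real \<Rightarrow> nat \<Rightarrow> real" where
  "cf_delta x k = \<bar>of_int (cf_q x k) * x - of_int (cf_p x k)\<bar>"

text \<open>b is the Ostrowski expansion of N < q_K (digits, extended by 0 for indices \<ge> K).
  By uniqueness of the Ostrowski expansion, these conditions determine b.\<close>
definition ostrowski_digits :: "real \<Rightarrow> nat \<Rightarrow> nat \<Rightarrow> (nat \<Rightarrow> nat) \<Rightarrow> bool" where
  "ostrowski_digits x K N b \<longleftrightarrow>
     int N = (\<Sum>l<K. int (b l) * cf_q x l)
   \<and> (\<forall>l<K. int (b l) \<le> cf_a x (Suc l))
   \<and> int (b 0) < cf_a x 1
   \<and> (\<forall>l. 1 \<le> l \<and> l < K \<and> int (b l) = cf_a x (Suc l) \<longrightarrow> b (l - 1) = 0)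
   \<and> (\<forall>l\<ge>K. b l = 0)"

definition ostrowski_eps :: "real \<Rightarrow> nat \<Rightarrow> (nat \<Rightarrow> nat) \<Rightarrow> nat \<Rightarrow> real" where
  "ostrowski_eps x K b l = of_int (cf_q x l) *
     (\<Sum>k\<in>{l+1..<K}. (-1) ^ (k + l) * real (b k) * cf_delta x k)"

end

theory Submission
  imports Defs
begin

text \<open>The recursions \<delta>_n = a_{n+2} \<delta>_{n+1} + \<delta>_{n+2} and
  q_{n+1} \<delta>_n + q_n \<delta>_{n+1} = 1 give 1/(a_{n+1} + 2) \<le> q_n \<delta>_n \<le> 1/a_{n+1}.
  The alternating tail T_m = \<Sum>_{k \<ge> m} (-1)^{k-m} b_k \<delta>_k satisfies \<epsilon>_l = -q_l T_{l+1}, and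
  since 0 \<le> b_k \<le> a_{k+1}, a downward induction traps T_{m+1} between -\<delta>_{m+1} and
  \<delta>_m - (a_{m+2} - b_{m+1}) \<delta>_{m+1}. This yields (i) and
  1 - |\<epsilon>_l| \<ge> (a_{l+2} - b_{l+1})/(a_{l+2} + 2); finally the Ostrowski condition turns
  b_l \<ge> 1 into b_{l+1} < a_{l+2}, which gives (ii) with c = 1/6.\<close>

lemma cf_rem_Suc: "cf_rem x (Suc n) = 1 / frac (cf_rem x n)"
  by (simp add: frac_def)

declare cf_rem.simps(2) [simp del]

lemma cf_rem_eq_a_plus_frac: "cf_rem x n = of_int (cf_a x n) + frac (cf_rem x n)"
  by (simp add: cf_a_def frac_def)

lemma cf_rem_irrational:
  assumes "x \<notin> \<rat>" shows "cf_rem x n \<notin> \<rat>"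
proof (induction n)
  case 0
  then show ?case using assms by simp
next
  case (Suc n)
  show ?case
  proof
    assume "cf_rem x (Suc n) \<in> \<rat>"
    moreover have "frac (cf_rem x n) = 1 / cf_rem x (Suc n)"
      by (simp add: cf_rem_Suc)
    ultimately have "frac (cf_rem x n) \<in> \<rat>"
      by simp
    then have "of_int (cf_a x n) + frac (cf_rem x n) \<in> \<rat>"
      by (intro Rats_add) auto
    then show False
      using Suc.IH cf_rem_eq_a_plus_frac by metis
  qed
qed

lemma frac_cf_rem_pos:
  assumes "x \<notin> \<rat>" shows "0 < frac (cf_rem x n)"
proof -
  have "cf_rem x n \<notin> \<int>"
    using cf_rem_irrational[OF assms] Ints_subset_Rats by blast
  then show ?thesis
    using frac_ge_0[of "cf_rem x n"] frac_eq_0_iff[of "cf_rem x n"] by linarith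
qed

lemma cf_a_Suc_ge_1:
  assumes "x \<notin> \<rat>" shows "cf_a x (Suc n) \<ge> 1"
proof -
  have "1 < 1 / frac (cf_rem x n)"
    using frac_cf_rem_pos[OF assms, of n] frac_lt_1[of "cf_rem x n"] by simp
  then show ?thesis
    unfolding cf_a_def cf_rem_Suc by linarith
qed

definition cf_err :: "real \<Rightarrow> nat \<Rightarrow> real" where
  "cf_err x n = of_int (cf_q x n) * x - of_int (cf_p x n)"

lemma cf_err_0: "cf_err x 0 = frac (cf_rem x 0)"
  by (simp add: cf_err_def frac_def cf_a_def)

lemma cf_err_rec: "cf_err x (Suc (Suc n)) = of_int (cf_a x (Suc (Suc n))) * cf_err x (Suc n) + cf_err x n"
  by (simp add: cf_err_def algebra_simps)

lemma frac_mult_cf_rem_Suc: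
  assumes "x \<notin> \<rat>" shows "frac (cf_rem x n) * cf_rem x (Suc n) = 1"
  using frac_cf_rem_pos[OF assms, of n] by (simp only: cf_rem_Suc) simp

lemma cf_err_Suc:
  assumes "x \<notin> \<rat>" shows "cf_err x (Suc n) = - cf_err x n * frac (cf_rem x (Suc n))"
proof (induction n)
  case 0
  have "cf_err x 1 = frac (cf_rem x 0) * (of_int (cf_a x 1) - cf_rem x 1)"
    using frac_mult_cf_rem_Suc[OF assms, of 0]
    by (simp add: cf_err_def frac_def cf_a_def algebra_simps)
  also have "of_int (cf_a x 1) - cf_rem x 1 = - frac (cf_rem x 1)"
    using cf_rem_eq_a_plus_frac[of x 1] by simp
  finally show ?case by (simp add: cf_err_0)
next
  case (Suc n)
  have "cf_err x (Suc n) * cf_rem x (Suc (Suc n))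
      = - cf_err x n * (frac (cf_rem x (Suc n)) * cf_rem x (Suc (Suc n)))"
    by (simp add: Suc.IH)
  then have "cf_err x n = - cf_err x (Suc n) * cf_rem x (Suc (Suc n))"
    by (simp add: frac_mult_cf_rem_Suc[OF assms])
  then have "cf_err x (Suc (Suc n))
      = cf_err x (Suc n) * (of_int (cf_a x (Suc (Suc n))) - cf_rem x (Suc (Suc n)))"
    by (simp add: cf_err_rec algebra_simps)
  also have "of_int (cf_a x (Suc (Suc n))) - cf_rem x (Suc (Suc n)) = - frac (cf_rem x (Suc (Suc n)))"
    using cf_rem_eq_a_plus_frac[of x "Suc (Suc n)"] by simp
  finally show ?case by simp
qed

lemma cf_err_sign:
  assumes "x \<notin> \<rat>" shows "0 < (-1) ^ n * cf_err x n"
proof (induction n)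
  case 0
  then show ?case using frac_cf_rem_pos[OF assms, of 0] by (simp add: cf_err_0)
next
  case (Suc n)
  have "(-1) ^ Suc n * cf_err x (Suc n) = ((-1) ^ n * cf_err x n) * frac (cf_rem x (Suc n))"
    by (simp add: cf_err_Suc[OF assms])
  with Suc.IH frac_cf_rem_pos[OF assms, of "Suc n"] show ?case
    by (metis mult_pos_pos)
qed

lemma cf_delta_eq_sign_err:
  assumes "x \<notin> \<rat>" shows "cf_delta x n = (-1) ^ n * cf_err x n"
proof -
  have "\<bar>cf_err x n\<bar> = (-1) ^ n * cf_err x n"
    using cf_err_sign[OF assms, of n] by (cases "even n") auto
  then show ?thesis by (simp add: cf_delta_def cf_err_def)
qed

lemma cf_delta_pos:
  assumes "x \<notin> \<rat>" shows "0 < cf_delta x n"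
  using cf_delta_eq_sign_err[OF assms] cf_err_sign[OF assms] by simp

lemma cf_delta_Suc:
  assumes "x \<notin> \<rat>" shows "cf_delta x (Suc n) = cf_delta x n * frac (cf_rem x (Suc n))"
  by (simp add: cf_delta_eq_sign_err[OF assms] cf_err_Suc[OF assms])

lemma cf_delta_Suc_le:
  assumes "x \<notin> \<rat>" shows "cf_delta x (Suc n) \<le> cf_delta x n"
  using cf_delta_pos[OF assms, of n] frac_lt_1[of "cf_rem x (Suc n)"]
  by (simp add: cf_delta_Suc[OF assms] mult_le_cancel_left1)

lemma cf_delta_rec:
  assumes "x \<notin> \<rat>"
  shows "cf_delta x n = of_int (cf_a x (Suc (Suc n))) * cf_delta x (Suc n) + cf_delta x (Suc (Suc n))"
  by (simp add: cf_delta_eq_sign_err[OF assms] cf_err_rec algebra_simps)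

lemma cf_q_ge_1:
  assumes "x \<notin> \<rat>" shows "cf_q x n \<ge> 1"
proof (induction n rule: induct_nat_012)
  case (ge2 n)
  have "0 \<le> cf_a x (Suc (Suc n)) * cf_q x (Suc n)"
    using ge2 cf_a_Suc_ge_1[OF assms, of "Suc n"] by simp
  with ge2 show ?case by simp
qed (use cf_a_Suc_ge_1[OF assms, of 0] in simp_all)

lemma cf_q_Suc_ge:
  assumes "x \<notin> \<rat>" shows "cf_a x (Suc n) * cf_q x n \<le> cf_q x (Suc n)"
proof (cases n)
  case (Suc m)
  have "0 \<le> cf_q x m" using cf_q_ge_1[OF assms, of m] by simp
  with Suc show ?thesis by simp
qed simp

lemma cf_q_le_Suc:
  assumes "x \<notin> \<rat>" shows "cf_q x n \<le> cf_q x (Suc n)"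
proof -
  have "1 * cf_q x n \<le> cf_a x (Suc n) * cf_q x n"
    using cf_a_Suc_ge_1[OF assms, of n] cf_q_ge_1[OF assms, of n] by (intro mult_right_mono) simp_all
  with cf_q_Suc_ge[OF assms, of n] show ?thesis by simp
qed

lemma cf_q_Suc_le:
  assumes "x \<notin> \<rat>" shows "cf_q x (Suc n) \<le> (cf_a x (Suc n) + 1) * cf_q x n"
proof (cases n)
  case (Suc m)
  then show ?thesis using cf_q_le_Suc[OF assms, of m] by (simp add: algebra_simps)
qed simp

lemma cf_q_delta_identity:
  assumes "x \<notin> \<rat>"
  shows "of_int (cf_q x (Suc n)) * cf_delta x n + of_int (cf_q x n) * cf_delta x (Suc n) = 1"
proof (induction n)
  case 0
  have "cf_delta x 0 = frac (cf_rem x 0)"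
    by (simp add: cf_delta_eq_sign_err[OF assms] cf_err_0)
  moreover have "frac (cf_rem x 0) * (of_int (cf_a x 1) + frac (cf_rem x 1)) = 1"
    using frac_mult_cf_rem_Suc[OF assms, of 0] cf_rem_eq_a_plus_frac[of x 1] by simp
  ultimately show ?case
    by (simp add: cf_delta_Suc[OF assms] algebra_simps)
next
  case (Suc n)
  have "of_int (cf_q x (Suc (Suc n))) * cf_delta x (Suc n) + of_int (cf_q x (Suc n)) * cf_delta x (Suc (Suc n))
      = of_int (cf_q x (Suc n)) * cf_delta x n + of_int (cf_q x n) * cf_delta x (Suc n)"
    using cf_delta_rec[OF assms, of n] by (simp add: algebra_simps)
  with Suc.IH show ?case by simp
qed

lemma cf_q_delta_le:
  assumes "x \<notin> \<rat>"
  shows "of_int (cf_q x n) * cf_delta x n \<le> 1 / of_int (cf_a x (Suc n))"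
proof -
  have "of_int (cf_a x (Suc n)) * (of_int (cf_q x n) * cf_delta x n) \<le> of_int (cf_q x (Suc n)) * cf_delta x n"
    using cf_q_Suc_ge[OF assms, of n] cf_delta_pos[OF assms, of n]
    by (simp add: mult.assoc[symmetric] mult_right_mono flip: of_int_mult)
  also have "\<dots> \<le> 1"
    using cf_q_delta_identity[OF assms, of n] cf_q_ge_1[OF assms, of n] cf_delta_pos[OF assms, of "Suc n"]
    by (smt (verit) mult_pos_pos of_int_pos)
  finally show ?thesis
    using cf_a_Suc_ge_1[OF assms, of n] by (simp add: le_divide_eq mult.commute)
qed

lemma cf_q_delta_Suc_le:
  assumes "x \<notin> \<rat>"
  shows "of_int (cf_q x n) * cf_delta x (Suc n) \<le> 1 / (of_int (cf_a x (Suc (Suc n))) + 1)"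
proof -
  let ?q = "of_int (cf_q x n) :: real"
  have "(of_int (cf_a x (Suc (Suc n))) + 1) * (?q * cf_delta x (Suc n))
      \<le> ?q * cf_delta x n + ?q * cf_delta x (Suc n)"
    using cf_delta_rec[OF assms, of n] cf_delta_pos[OF assms, of "Suc (Suc n)"] cf_q_ge_1[OF assms, of n]
    by (simp add: algebra_simps)
  also have "\<dots> \<le> 1"
    using cf_q_delta_identity[OF assms, of n] cf_q_le_Suc[OF assms, of n] cf_delta_pos[OF assms, of n]
    by (smt (verit) mult_right_mono of_int_le_iff)
  finally show ?thesis
    using cf_a_Suc_ge_1[OF assms, of "Suc n"] by (simp add: le_divide_eq mult.commute)
qed

lemma cf_q_delta_ge:
  assumes "x \<notin> \<rat>"
  shows "1 / (of_int (cf_a x (Suc n)) + 2) \<le> of_int (cf_q x n) * cf_delta x n"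
proof -
  let ?q = "of_int (cf_q x n) :: real"
  have "1 \<le> (of_int (cf_a x (Suc n)) + 1) * ?q * cf_delta x n + ?q * cf_delta x n"
    using cf_q_delta_identity[OF assms, of n] cf_q_Suc_le[OF assms, of n] cf_delta_pos[OF assms, of n]
      cf_delta_Suc_le[OF assms, of n] cf_q_ge_1[OF assms, of n]
    by (smt (verit) mult_left_mono mult_right_mono of_int_1 of_int_add of_int_le_iff of_int_mult)
  then show ?thesis
    using cf_a_Suc_ge_1[OF assms, of n] by (simp add: divide_le_eq algebra_simps)
qed

lemma cf_q_delta_diff_le:
  assumes x: "x \<notin> \<rat>" and "0 \<le> \<beta>" and "\<beta> \<le> of_int (cf_a x (Suc (Suc n))) + 2"
  shows "of_int (cf_q x n) * cf_delta x n - \<beta> * (of_int (cf_q x n) * cf_delta x (Suc n))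
    \<le> 1 - \<beta> / (of_int (cf_a x (Suc (Suc n))) + 2)"
proof -
  define q q' d d' c where "q = (of_int (cf_q x n) :: real)" and "q' = (of_int (cf_q x (Suc n)) :: real)"
    and "d = cf_delta x n" and "d' = cf_delta x (Suc n)"
    and "c = 1 - \<beta> / (of_int (cf_a x (Suc (Suc n))) + 2)"
  have q_pos: "0 < q" and q_le: "q \<le> q'" and d'_pos: "0 < d'"
    using cf_q_ge_1[OF x, of n] cf_q_le_Suc[OF x, of n] cf_delta_pos[OF x, of "Suc n"]
    by (simp_all add: q_def q'_def d'_def)
  have c_nonneg: "0 \<le> c"
    using assms(3) cf_a_Suc_ge_1[OF x, of "Suc n"] by (simp add: c_def)
  have "\<beta> * (1 / (of_int (cf_a x (Suc (Suc n))) + 2)) \<le> \<beta> * (q' * d')"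
    using cf_q_delta_ge[OF x, of "Suc n"] assms(2) unfolding q'_def d'_def by (rule mult_left_mono)
  moreover have "0 \<le> q * d'"
    using q_pos d'_pos by simp
  ultimately have "1 - q * d' - \<beta> * (q' * d') \<le> c"
    by (simp add: c_def)
  moreover have "q' * d - \<beta> * (q' * d') = 1 - q * d' - \<beta> * (q' * d')"
    using cf_q_delta_identity[OF x, of n] by (simp add: q_def q'_def d_def d'_def)
  ultimately have "q * (q' * d - \<beta> * (q' * d')) \<le> q * c"
    using q_pos by simp
  then have "q' * (q * d - \<beta> * (q * d')) \<le> q * c"
    by (simp add: algebra_simps)
  also have "\<dots> \<le> q' * c"
    using q_le c_nonneg by (rule mult_right_mono)
  finally show ?thesis
    using q_pos q_le by (simp add: q_def d_def d'_def c_def)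
qed

definition ostrowski_tail :: "real \<Rightarrow> nat \<Rightarrow> (nat \<Rightarrow> nat) \<Rightarrow> nat \<Rightarrow> real" where
  "ostrowski_tail x K b m = (\<Sum>k\<in>{m..<K}. (-1) ^ (k - m) * real (b k) * cf_delta x k)"

lemma ostrowski_tail_eq_0: "K \<le> m \<Longrightarrow> ostrowski_tail x K b m = 0"
  by (simp add: ostrowski_tail_def)

lemma ostrowski_tail_rec:
  assumes "m < K"
  shows "ostrowski_tail x K b m = real (b m) * cf_delta x m - ostrowski_tail x K b (Suc m)"
proof -
  have "ostrowski_tail x K b m
      = real (b m) * cf_delta x m + (\<Sum>k\<in>{Suc m..<K}. (-1) ^ (k - m) * real (b k) * cf_delta x k)"
    unfolding ostrowski_tail_def using assms by (simp add: sum.atLeast_Suc_lessThan)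
  also have "(\<Sum>k\<in>{Suc m..<K}. (-1) ^ (k - m) * real (b k) * cf_delta x k)
      = - ostrowski_tail x K b (Suc m)"
    unfolding ostrowski_tail_def sum_negf[symmetric]
  proof (rule sum.cong)
    fix k assume "k \<in> {Suc m..<K}"
    then have "k - m = Suc (k - Suc m)" by auto
    then show "(-1) ^ (k - m) * real (b k) * cf_delta x k = - ((-1) ^ (k - Suc m) * real (b k) * cf_delta x k)"
      by simp
  qed simp
  finally show ?thesis by simp
qed

lemma ostrowski_tail_bounds:
  assumes x: "x \<notin> \<rat>" and digits: "\<And>k. int (b k) \<le> cf_a x (Suc k)"
  shows "- cf_delta x (Suc m) \<le> ostrowski_tail x K b (Suc m)
    \<and> ostrowski_tail x K b (Suc m) \<le> cf_delta x m"
proof (induction m rule: measure_induct_rule[where f = "\<lambda>m. K - m"])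
  case (less m)
  show ?case
  proof (cases "Suc m < K")
    case False
    then show ?thesis
      using ostrowski_tail_eq_0[of K "Suc m"] cf_delta_pos[OF x] by (simp add: less_imp_le)
  next
    case True
    have "real (b (Suc m)) \<le> of_int (cf_a x (Suc (Suc m)))"
      using digits[of "Suc m"] by (metis of_int_le_iff of_int_of_nat_eq)
    then have "real (b (Suc m)) * cf_delta x (Suc m) \<le> of_int (cf_a x (Suc (Suc m))) * cf_delta x (Suc m)"
      using cf_delta_pos[OF x, of "Suc m"] by (intro mult_right_mono) auto
    moreover have "0 \<le> real (b (Suc m)) * cf_delta x (Suc m)"
      using cf_delta_pos[OF x, of "Suc m"] by simp
    moreover have "- cf_delta x (Suc (Suc m)) \<le> ostrowski_tail x K b (Suc (Suc m))
        \<and> ostrowski_tail x K b (Suc (Suc m)) \<le> cf_delta x (Suc m)"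
      using less[of "Suc m"] True by simp
    ultimately show ?thesis
      using ostrowski_tail_rec[OF True, where x = x and b = b] cf_delta_rec[OF x, of m] by linarith
  qed
qed

lemma ostrowski_tail_le:
  assumes x: "x \<notin> \<rat>" and digits: "\<And>k. int (b k) \<le> cf_a x (Suc k)"
  shows "ostrowski_tail x K b (Suc m)
    \<le> cf_delta x m - (of_int (cf_a x (Suc (Suc m))) - real (b (Suc m))) * cf_delta x (Suc m)"
proof (cases "Suc m < K")
  case True
  then show ?thesis
    using ostrowski_tail_rec[OF True, where x = x and b = b]
      ostrowski_tail_bounds[OF x digits, where K = K and m = "Suc m"] cf_delta_rec[OF x, of m]
    by (simp add: algebra_simps)
next
  case False
  then show ?thesis
    using ostrowski_tail_eq_0[of K "Suc m"] cf_delta_rec[OF x, of m] cf_delta_pos[OF x, of "Suc (Suc m)"]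
      cf_delta_pos[OF x, of "Suc m"] by (simp add: algebra_simps)
qed

lemma ostrowski_eps_eq_tail:
  "ostrowski_eps x K b l = - of_int (cf_q x l) * ostrowski_tail x K b (Suc l)"
proof -
  have "(\<Sum>k\<in>{l+1..<K}. (-1) ^ (k + l) * real (b k) * cf_delta x k)
      = - ostrowski_tail x K b (Suc l)"
    unfolding ostrowski_tail_def sum_negf[symmetric]
  proof (rule sum.cong)
    fix k assume "k \<in> {Suc l..<K}"
    then have "k + l = (k - Suc l) + 2 * l + 1" by auto
    then have "(-1::real) ^ (k + l) = - ((-1) ^ (k - Suc l))"
      by (simp only: power_add power_mult) simp
    then show "(-1) ^ (k + l) * real (b k) * cf_delta x k = - ((-1) ^ (k - Suc l) * real (b k) * cf_delta x k)"
      by simp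
  qed simp
  then show ?thesis by (simp add: ostrowski_eps_def)
qed

lemma ostrowski_eps_bounds:
  assumes x: "x \<notin> \<rat>" and digits: "\<And>k. int (b k) \<le> cf_a x (Suc k)"
  shows "- 1 / of_int (cf_a x (Suc l)) \<le> - of_int (cf_q x l) * cf_delta x l
    \<and> - of_int (cf_q x l) * cf_delta x l \<le> ostrowski_eps x K b l
    \<and> ostrowski_eps x K b l \<le> 1 / of_int (cf_a x (Suc l))"
proof -
  let ?q = "of_int (cf_q x l) :: real" and ?T = "ostrowski_tail x K b (Suc l)"
  have q_pos: "0 < ?q" using cf_q_ge_1[OF x, of l] by simp
  have T: "- cf_delta x (Suc l) \<le> ?T" "?T \<le> cf_delta x l"
    using ostrowski_tail_bounds[OF x digits, of l K] by simp_all
  have "- ?q * cf_delta x l \<le> - ?q * ?T"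
    using T(2) q_pos by simp
  moreover have "?q * (- ?T) \<le> ?q * cf_delta x l"
    using T(1) cf_delta_Suc_le[OF x, of l] q_pos by (intro mult_left_mono) auto
  ultimately show ?thesis
    using cf_q_delta_le[OF x, of l] by (simp add: ostrowski_eps_eq_tail)
qed

lemma ostrowski_eps_abs_le:
  assumes x: "x \<notin> \<rat>" and digits: "\<And>k. int (b k) \<le> cf_a x (Suc k)"
  shows "\<bar>ostrowski_eps x K b l\<bar>
    \<le> 1 - (of_int (cf_a x (Suc (Suc l))) - real (b (Suc l))) / (of_int (cf_a x (Suc (Suc l))) + 2)"
proof -
  let ?q = "of_int (cf_q x l) :: real" and ?T = "ostrowski_tail x K b (Suc l)"
  let ?a = "of_int (cf_a x (Suc (Suc l))) :: real" and ?\<beta> = "of_int (cf_a x (Suc (Suc l))) - real (b (Suc l))"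
  have q_pos: "0 < ?q" using cf_q_ge_1[OF x, of l] by simp
  have a_ge_1: "1 \<le> ?a" using cf_a_Suc_ge_1[OF x, of "Suc l"] by simp
  have "real (b (Suc l)) \<le> ?a"
    using digits[of "Suc l"] by (metis of_int_le_iff of_int_of_nat_eq)
  then have \<beta>: "0 \<le> ?\<beta>" "?\<beta> \<le> ?a + 2"
    by simp_all
  have "?q * (- ?T) \<le> ?q * cf_delta x (Suc l)"
    using ostrowski_tail_bounds[OF x digits, of l K] q_pos by (intro mult_left_mono) auto
  then have "ostrowski_eps x K b l \<le> ?q * cf_delta x (Suc l)"
    by (simp add: ostrowski_eps_eq_tail)
  also have "\<dots> \<le> 1 / (?a + 1)"
    by (rule cf_q_delta_Suc_le[OF x])
  also have "\<dots> \<le> 1 - ?\<beta> / (?a + 2)"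
    using a_ge_1 \<beta> by (simp add: field_simps)
  finally have upper: "ostrowski_eps x K b l \<le> 1 - ?\<beta> / (?a + 2)" .
  have "- ostrowski_eps x K b l \<le> ?q * (cf_delta x l - ?\<beta> * cf_delta x (Suc l))"
    using ostrowski_tail_le[OF x digits, of K l] q_pos
    by (simp add: ostrowski_eps_eq_tail mult_left_mono)
  also have "\<dots> \<le> 1 - ?\<beta> / (?a + 2)"
    using cf_q_delta_diff_le[OF x \<beta>] by (simp add: algebra_simps)
  finally show ?thesis
    using upper by simp
qed

lemma ostrowski_digits_le_cf_a:
  assumes "x \<notin> \<rat>" and "ostrowski_digits x K N b"
  shows "int (b k) \<le> cf_a x (Suc k)"
  using assms(2) cf_a_Suc_ge_1[OF assms(1), of k] unfolding ostrowski_digits_def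
  by (cases "k < K") auto

lemma ostrowski_digits_Suc_less:
  assumes "x \<notin> \<rat>" and "ostrowski_digits x K N b" and "b l \<ge> 1"
  shows "int (b (Suc l)) < cf_a x (Suc (Suc l))"
proof (cases "Suc l < K")
  case True
  then have "int (b (Suc l)) \<noteq> cf_a x (Suc (Suc l))"
    using assms(2,3) unfolding ostrowski_digits_def by (metis diff_Suc_1 le_add1 not_one_le_zero plus_1_eq_Suc)
  with ostrowski_digits_le_cf_a[OF assms(1,2)] show ?thesis
    by (simp add: order_less_le)
next
  case False
  then show ?thesis
    using assms(2) cf_a_Suc_ge_1[OF assms(1), of "Suc l"] unfolding ostrowski_digits_def by simp
qed

theorem proposition2:
  shows "\<exists>c>0. \<forall>(x::real) (K::nat) (N::nat) (b::nat \<Rightarrow> nat) (l::nat).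
    x \<notin> \<rat> \<and> K \<ge> 2 \<and> int N < cf_q x K \<and> ostrowski_digits x K N b
    \<and> 1 \<le> l \<and> l \<le> K - 1 \<and> b l \<ge> 1 \<longrightarrow>
      (- 1 / real_of_int (cf_a x (l+1)) \<le> - real_of_int (cf_q x l) * cf_delta x l
       \<and> - real_of_int (cf_q x l) * cf_delta x l \<le> ostrowski_eps x K b l
       \<and> ostrowski_eps x K b l \<le> 1 / real_of_int (cf_a x (l+1)))
    \<and> 1 - \<bar>ostrowski_eps x K b l\<bar> \<ge> c / real_of_int (cf_a x (l+2))
    \<and> (real (b (l+1)) \<le> real_of_int (cf_a x (l+2)) / 2 \<longrightarrow>
         1 - \<bar>ostrowski_eps x K b l\<bar> \<ge> c)"
proof (intro exI[of _ "1/6"] conjI allI impI)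
  fix x :: real and K N :: nat and b :: "nat \<Rightarrow> nat" and l :: nat
  assume "x \<notin> \<rat> \<and> K \<ge> 2 \<and> int N < cf_q x K \<and> ostrowski_digits x K N b
    \<and> 1 \<le> l \<and> l \<le> K - 1 \<and> b l \<ge> 1"
  then have x: "x \<notin> \<rat>" and digits: "ostrowski_digits x K N b" and "b l \<ge> 1"
    by auto
  let ?a = "real_of_int (cf_a x (l+2))" and ?e = "ostrowski_eps x K b l"
  have a_ge_1: "1 \<le> ?a"
    using cf_a_Suc_ge_1[OF x, of "Suc l"] by (simp add: numeral_2_eq_2)
  have b_less: "real (b (l+1)) + 1 \<le> ?a"
    using ostrowski_digits_Suc_less[OF x digits \<open>b l \<ge> 1\<close>] by (simp add: numeral_2_eq_2)
  have eps_abs: "(?a - real (b (l+1))) / (?a + 2) \<le> 1 - \<bar>?e\<bar>"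
    using ostrowski_eps_abs_le[OF x ostrowski_digits_le_cf_a[OF x digits], of K l]
    by (simp add: numeral_2_eq_2)
  show "- 1 / real_of_int (cf_a x (l+1)) \<le> - real_of_int (cf_q x l) * cf_delta x l"
    "- real_of_int (cf_q x l) * cf_delta x l \<le> ?e" "?e \<le> 1 / real_of_int (cf_a x (l+1))"
    using ostrowski_eps_bounds[OF x ostrowski_digits_le_cf_a[OF x digits], of l K] by simp_all
  have "(1/6) / ?a \<le> 1 / (?a + 2)"
    using a_ge_1 by (simp add: field_simps)
  also have "\<dots> \<le> (?a - real (b (l+1))) / (?a + 2)"
    using b_less a_ge_1 by (simp add: divide_right_mono)
  finally show "(1/6) / ?a \<le> 1 - \<bar>?e\<bar>"
    using eps_abs by linarith
  assume "real (b (l+1)) \<le> ?a / 2"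
  then have "1/6 \<le> (?a - real (b (l+1))) / (?a + 2)"
    using a_ge_1 by (simp add: field_simps)
  then show "1/6 \<le> 1 - \<bar>?e\<bar>"
    using eps_abs by linarith
qed simp

end
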